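(* The tree $\widehat T_n$ output by PruneTree equals the smallest tree contained in $E_n$ that contains every $w\in E_n$ with $\mathsf{CanRmv}(w)=0$.
   Context: $A$ is a finite alphabet; strings $w=w_{-j}\cdots w_{-1}$ over $A$; $e$ is the empty string; $w\preceq w'$ means $w$ is a suffix of $w'$; $\mathrm{par}(w_{-j}\cdots w_{-1})=w_{-j+1}\cdots w_{-1}$. A tree is a set of strings containing $e$ and closed under $\mathrm{par}$; a leaf is an element that is the parent of no element. Data: for $\ell=1,\dots,L$ a sample $X_1^n(\ell)\in A^n$; $N_{j,\ell}(w)$ is the number of occurrences of $w$ as a block of consecutive symbols in $X_1^j(\ell)$; $\hat p_{n,\ell}(a|w)=N_{n,\ell}(wa)/N_{n-1,\ell}(w)$ when $\min_\ell N_{n-1,\ell}(w)>0$. Metrics $d_\ell$ on distributions over $A$, $d(q,q')=(d_\ell(q_\ell,q'_\ell))_\ell$, $\hat p_n(\cdot|w)=(\hat p_{n,\ell}(\cdot|w))_\ell$; confidence radii $\mathrm{conf}(w)\in[0,1]^L$; $\|v\|_{L,q}=(\frac1L\sum_\ell|v_\ell|^q)^{1/q}$; fixed $k,r\ge1$ and $c>1$. $E_n=\{w:\min_\ell N_{n-1,\ell}(w)>0\}$. For nonempty $w\in E_n$, $\mathsf{CanRmv}(w)=1$ iff for all $w',w''\in E_n$ with $w\preceq w'$ and $\mathrm{par}(w)\preceq w''$: $\|d(\hat p_n(\cdot|w'),\hat p_n(\cdot|w''))\|_{L,k}\le c\|\mathrm{conf}(w')\|_{L,r}+c\|\mathrm{conf}(w'')\|_{L,r}$;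 otherwise $0$. PruneTree: start with $\widehat T_n=E_n$ and all nodes unexamined; while $\widehat T_n$ has an unexamined leaf $w$ ($w\neq e$), remove $w$ from $\widehat T_n$ if $\mathsf{CanRmv}(w)=1$, and mark $w$ examined; output $\widehat T_n$. *)

theory Defs
  imports Complex_Main "HOL-Library.Sublist"
begin

text \<open>Strings over the alphabet 'a are lists; the string w_{-j} ... w_{-1} is the list
[w_{-j}, ..., w_{-1}] (oldest symbol first). 
The suffix relation w \<preceq> w' is Sublist.suffix w w', i.e. w' = u @ w.\<close>

definition par :: "'a list \<Rightarrow> 'a list" where
  "par w = tl w"

definition is_tree :: "'a list set \<Rightarrow> bool" where
  "is_tree T \<longleftrightarrow> [] \<in> T \<and> (\<forall>w\<in>T. w \<noteq> [] \<longrightarrow> par w \<in> T)"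

definition is_leaf :: "'a list set \<Rightarrow> 'a list \<Rightarrow> bool" where
  "is_leaf T w \<longleftrightarrow> w \<in> T \<and> (\<forall>u\<in>T. u \<noteq> [] \<longrightarrow> par u \<noteq> w)"

text \<open>Sample ell is X ell 1, ..., X ell n. occ_count X ell j w = N_{j,ell}(w): the number of
occurrences of w as a block of consecutive symbols in X ell 1 ... X ell j
(the empty string occurs j+1 times, once at each position i = 1..j+1).\<close>

definition occ_count :: "(nat \<Rightarrow> nat \<Rightarrow> 'a) \<Rightarrow> nat \<Rightarrow> nat \<Rightarrow> 'a list \<Rightarrow> nat" where
  "occ_count X l j w =
     card {i. 1 \<le> i \<and> i + length w \<le> j + 1 \<and> (\<forall>k<length w. X l (i + k) = w ! k)}"

definition E_set :: "(nat \<Rightarrow> nat \<Rightarrow> 'a) \<Rightarrow> nat \<Rightarrow> nat \<Rightarrow> 'a list set" where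
  "E_set X L n = {w. \<forall>l\<in>{1..L}. 0 < occ_count X l (n - 1) w}"

definition p_hat :: "(nat \<Rightarrow> nat \<Rightarrow> 'a) \<Rightarrow> nat \<Rightarrow> nat \<Rightarrow> 'a list \<Rightarrow> 'a \<Rightarrow> real" where
  "p_hat X n l w a = real (occ_count X l n (w @ [a])) / real (occ_count X l (n - 1) w)"

definition normLq :: "nat \<Rightarrow> real \<Rightarrow> (nat \<Rightarrow> real) \<Rightarrow> real" where
  "normLq L q v = ((1 / real L) * (\<Sum>l = 1..L. \<bar>v l\<bar> powr q)) powr (1 / q)"

definition is_distribution :: "('a::finite \<Rightarrow> real) \<Rightarrow> bool" where
  "is_distribution q \<longleftrightarrow> (\<forall>a. 0 \<le> q a) \<and> (\<Sum>a\<in>UNIV. q a) = 1"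

definition metric_on_distributions :: "(('a::finite \<Rightarrow> real) \<Rightarrow> ('a \<Rightarrow> real) \<Rightarrow> real) \<Rightarrow> bool" where
  "metric_on_distributions d \<longleftrightarrow>
     (\<forall>p q. is_distribution p \<longrightarrow> is_distribution q \<longrightarrow> 0 \<le> d p q \<and> d p q = d q p \<and> (d p q = 0 \<longleftrightarrow> p = q)) \<and>
     (\<forall>p q s. is_distribution p \<longrightarrow> is_distribution q \<longrightarrow> is_distribution s \<longrightarrow> d p s \<le> d p q + d q s)"

text \<open>CanRmv(w) = 1 is rendered as the boolean CanRmv ... w = True (meaningful for nonempty w in E_n).\<close>

definition CanRmv ::
  "(nat \<Rightarrow> nat \<Rightarrow> 'a) \<Rightarrow> nat \<Rightarrow> nat \<Rightarrow> (nat \<Rightarrow> ('a \<Rightarrow> real) \<Rightarrow> ('a \<Rightarrow> real) \<Rightarrow> real)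
   \<Rightarrow> ('a list \<Rightarrow> nat \<Rightarrow> real) \<Rightarrow> real \<Rightarrow> real \<Rightarrow> real \<Rightarrow> 'a list \<Rightarrow> bool" where
  "CanRmv X L n d conf k r c w \<longleftrightarrow>
     (\<forall>w'\<in>E_set X L n. \<forall>w''\<in>E_set X L n. suffix w w' \<longrightarrow> suffix (par w) w'' \<longrightarrow>
        normLq L k (\<lambda>l. d l (p_hat X n l w') (p_hat X n l w''))
          \<le> c * normLq L r (conf w') + c * normLq L r (conf w''))"

text \<open>One iteration of the (nondeterministic) while loop of PruneTree, on states
(current tree, set of examined nodes), for a removability predicate R.\<close>

definition prune_step :: "('a list \<Rightarrow> bool) \<Rightarrow> ('a list set \<times> 'a list set) \<Rightarrow> ('a list set \<times> 'a list set) \<Rightarrow> bool" where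
  "prune_step R s s' \<longleftrightarrow> (\<exists>w. w \<noteq> [] \<and> is_leaf (fst s) w \<and> w \<notin> snd s \<and>
      s' = ((if R w then fst s - {w} else fst s), insert w (snd s)))"

definition prune_final :: "('a list set \<times> 'a list set) \<Rightarrow> bool" where
  "prune_final s \<longleftrightarrow> \<not> (\<exists>w. w \<noteq> [] \<and> is_leaf (fst s) w \<and> w \<notin> snd s)"

end

theory Submission
  imports Defs
begin

text \<open>PruneTree only ever deletes leaves, so its state stays a tree, and it only deletes
removable nodes, so every non-removable node of E survives. When the loop stops, every
nonempty leaf has been examined and kept, hence is non-removable; since every node of a
finite tree lies below one of its leaves, the output is contained in any tree that contains
the non-removable nodes. Termination holds because each step examines a new node of the
finite set E. Nothing about CanRmv beyond its being a predicate is used.\<close>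

lemma occ_count_pos_iff:
  "0 < occ_count X l j w \<longleftrightarrow>
     (\<exists>i. 1 \<le> i \<and> i + length w \<le> j + 1 \<and> (\<forall>k<length w. X l (i + k) = w ! k))"
proof -
  have "finite {i. 1 \<le> i \<and> i + length w \<le> j + 1 \<and> (\<forall>k<length w. X l (i + k) = w ! k)}"
    by (rule finite_subset[of _ "{..j+1}"]) auto
  then show ?thesis
    unfolding occ_count_def by (auto simp: card_gt_0_iff)
qed

lemma Nil_in_E_set: "1 \<le> n \<Longrightarrow> [] \<in> E_set X L n"
  unfolding E_set_def occ_count_pos_iff by auto

lemma tl_in_E_set:
  assumes "w \<in> E_set X L n"
  shows "tl w \<in> E_set X L n"
proof (cases w)
  case Nil
  then show ?thesis using assms by simp
next
  case (Cons a v)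
  show ?thesis
    unfolding E_set_def occ_count_pos_iff mem_Collect_eq
  proof
    fix l assume "l \<in> {1..L}"
    with assms obtain i where i: "1 \<le> i" "i + length w \<le> n - 1 + 1"
        "\<forall>k<length w. X l (i + k) = w ! k"
      unfolding E_set_def occ_count_pos_iff by blast
    have "\<forall>k<length v. X l (i + 1 + k) = v ! k"
      using i(3) Cons by auto
    then show "\<exists>i. 1 \<le> i \<and> i + length (tl w) \<le> n - 1 + 1 \<and>
        (\<forall>k<length (tl w). X l (i + k) = tl w ! k)"
      using i(2) Cons by (intro exI[of _ "i + 1"]) auto
  qed
qed

lemma is_tree_E_set: "1 \<le> n \<Longrightarrow> is_tree (E_set X L n)"
  unfolding is_tree_def par_def using Nil_in_E_set tl_in_E_set by blast

lemma length_less_of_in_E_set: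
  assumes "1 \<le> L" "1 \<le> n" "w \<in> E_set X L n"
  shows "length w < n"
proof -
  from assms obtain i where "1 \<le> i" "i + length w \<le> n - 1 + 1"
    unfolding E_set_def occ_count_pos_iff by fastforce
  then show ?thesis using assms(2) by linarith
qed

lemma finite_E_set:
  assumes "1 \<le> L" "1 \<le> n"
  shows "finite (E_set X L n :: 'a::finite list set)"
proof (rule finite_subset)
  show "E_set X L n \<subseteq> {xs. set xs \<subseteq> UNIV \<and> length xs \<le> n}"
    using length_less_of_in_E_set[OF assms] by (fastforce simp: less_imp_le)
  show "finite {xs :: 'a list. set xs \<subseteq> UNIV \<and> length xs \<le> n}"
    by (rule finite_lists_length_le) simp
qed

lemma subset_tree_if_leaves_in_tree:
  assumes "finite T" "is_tree T'"
    and leaves: "\<And>w. w \<noteq> [] \<Longrightarrow> is_leaf T w \<Longrightarrow> w \<in> T'"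
  shows "T \<subseteq> T'"
proof
  define m where "m = Max (length ` T)"
  fix u assume "u \<in> T"
  then show "u \<in> T'"
  proof (induction "m - length u" arbitrary: u rule: less_induct)
    case less
    show ?case
    proof (cases "u = [] \<or> is_leaf T u")
      case True
      moreover have "[] \<in> T'"
        using assms(2) unfolding is_tree_def by simp
      ultimately show ?thesis
        using leaves by (cases "u = []") simp_all
    next
      case False
      then obtain v where v: "v \<in> T" "v \<noteq> []" "par v = u"
        using less.prems unfolding is_leaf_def by auto
      have "length v = Suc (length u)"
        using v(2,3) unfolding par_def by (cases v) auto
      moreover have "length v \<le> m"
        unfolding m_def using assms(1) v(1) by (simp add: Max_ge)
      ultimately have "m - length v < m - length u"
        by simp
      then have "v \<in> T'"
        using less.hyps v(1) by blast
      then show ?thesis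
        using assms(2) v unfolding is_tree_def by auto
    qed
  qed
qed

definition prune_invariant :: "'a list set \<Rightarrow> ('a list \<Rightarrow> bool) \<Rightarrow> 'a list set \<times> 'a list set \<Rightarrow> bool"
  where "prune_invariant E R s \<longleftrightarrow>
    is_tree (fst s) \<and> fst s \<subseteq> E \<and> snd s \<subseteq> E \<and> {w \<in> E. w \<noteq> [] \<and> \<not> R w} \<subseteq> fst s
    \<and> (\<forall>w\<in>snd s. w \<in> fst s \<longrightarrow> \<not> R w)"

lemma prune_invariant_init: "is_tree E \<Longrightarrow> prune_invariant E R (E, {})"
  unfolding prune_invariant_def by auto

lemma prune_step_preserves_invariant:
  assumes "prune_step R s s'" "prune_invariant E R s"
  shows "prune_invariant E R s'"
proof -
  from assms(1) obtain w where w: "w \<noteq> []" "is_leaf (fst s) w" "w \<notin> snd s"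
    and s': "s' = (if R w then fst s - {w} else fst s, insert w (snd s))"
    unfolding prune_step_def by auto
  have "is_tree (fst s')"
    using assms(2) w s' unfolding prune_invariant_def is_tree_def is_leaf_def by auto
  then show ?thesis
    using assms(2) w s' unfolding prune_invariant_def is_leaf_def by auto
qed

lemma prune_steps_preserve_invariant:
  assumes "(prune_step R)\<^sup>*\<^sup>* s s'" "prune_invariant E R s"
  shows "prune_invariant E R s'"
  using assms by (induction rule: rtranclp_induct) (auto intro: prune_step_preserves_invariant)

lemma prune_final_exists:
  assumes "finite E" "T \<subseteq> E" "Xs \<subseteq> E"
  shows "\<exists>T' Xs'. (prune_step R)\<^sup>*\<^sup>* (T, Xs) (T', Xs') \<and> prune_final (T', Xs')"
  using assms(2,3)
proof (induction "card (E - Xs)" arbitrary: T Xs rule: less_induct)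
  case less
  show ?case
  proof (cases "prune_final (T, Xs)")
    case True
    then show ?thesis by blast
  next
    case False
    then obtain w where w: "w \<noteq> []" "is_leaf T w" "w \<notin> Xs"
      unfolding prune_final_def by auto
    define T1 where "T1 = (if R w then T - {w} else T)"
    have step: "prune_step R (T, Xs) (T1, insert w Xs)"
      unfolding prune_step_def T1_def using w by auto
    have "w \<in> E"
      using w(2) less.prems(1) unfolding is_leaf_def by auto
    then have "card (E - insert w Xs) < card (E - Xs)"
      using w(3) assms(1) by (intro psubset_card_mono) auto
    moreover have "T1 \<subseteq> E" "insert w Xs \<subseteq> E"
      using less.prems \<open>w \<in> E\<close> unfolding T1_def by auto
    ultimately obtain T' Xs' where
      "(prune_step R)\<^sup>*\<^sup>* (T1, insert w Xs) (T', Xs')" "prune_final (T', Xs')"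
      using less.hyps by blast
    then show ?thesis
      using step by (meson converse_rtranclp_into_rtranclp)
  qed
qed

lemma prune_final_least_tree:
  assumes "finite E" "is_tree E"
    and run: "(prune_step R)\<^sup>*\<^sup>* (E, {}) (T, Xs)" and final: "prune_final (T, Xs)"
  shows "is_tree T \<and> T \<subseteq> E \<and> {w \<in> E. w \<noteq> [] \<and> \<not> R w} \<subseteq> T \<and>
    (\<forall>T'. is_tree T' \<and> T' \<subseteq> E \<and> {w \<in> E. w \<noteq> [] \<and> \<not> R w} \<subseteq> T' \<longrightarrow> T \<subseteq> T')"
proof -
  have inv: "prune_invariant E R (T, Xs)"
    using prune_steps_preserve_invariant[OF run prune_invariant_init[OF assms(2)]] .
  have leaf_kept: "w \<in> E \<and> \<not> R w" if "w \<noteq> []" "is_leaf T w" for w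
    using that final inv unfolding prune_final_def prune_invariant_def is_leaf_def by auto
  have "T \<subseteq> T'" if "is_tree T'" "{w \<in> E. w \<noteq> [] \<and> \<not> R w} \<subseteq> T'" for T'
    using subset_tree_if_leaves_in_tree[of T T'] finite_subset[of T E] inv leaf_kept that assms(1)
    unfolding prune_invariant_def by auto
  then show ?thesis
    using inv unfolding prune_invariant_def by auto
qed

theorem propositionA1:
  fixes X :: "nat \<Rightarrow> nat \<Rightarrow> 'a::finite"
    and L n :: nat
    and d :: "nat \<Rightarrow> ('a \<Rightarrow> real) \<Rightarrow> ('a \<Rightarrow> real) \<Rightarrow> real"
    and conf :: "'a list \<Rightarrow> nat \<Rightarrow> real"
    and k r c :: real
  assumes "1 \<le> L" and "1 \<le> n"
    and "\<And>l. l \<in> {1..L} \<Longrightarrow> metric_on_distributions (d l)"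
    and "\<And>w l. l \<in> {1..L} \<Longrightarrow> 0 \<le> conf w l \<and> conf w l \<le> 1"
    and "1 \<le> k" and "1 \<le> r" and "1 < c"
  defines "E \<equiv> E_set X L n"
    and "R \<equiv> CanRmv X L n d conf k r c"
  shows "(\<exists>T Ex. (prune_step R)\<^sup>*\<^sup>* (E, {}) (T, Ex) \<and> prune_final (T, Ex))
     \<and> (\<forall>T Ex. (prune_step R)\<^sup>*\<^sup>* (E, {}) (T, Ex) \<and> prune_final (T, Ex) \<longrightarrow>
          is_tree T \<and> T \<subseteq> E \<and> {w \<in> E. w \<noteq> [] \<and> \<not> R w} \<subseteq> T \<and>
          (\<forall>T'. is_tree T' \<and> T' \<subseteq> E \<and> {w \<in> E. w \<noteq> [] \<and> \<not> R w} \<subseteq> T' \<longrightarrow> T \<subseteq> T'))"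
proof -
  have "finite E" "is_tree E"
    unfolding E_def using finite_E_set[OF assms(1,2)] is_tree_E_set[OF assms(2)] by auto
  then show ?thesis
    using prune_final_exists[of E E "{}" R] prune_final_least_tree[of E R] by blast
qed

end
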